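(* Let $\alpha=[0;a_1,a_2,\dots]$ and $\beta=[0;b_1,b_2,\dots]$ be irrational power series in $\widehat K$ (all $a_i,b_i$ nonconstant polynomials in $R$). Assume there is an integer $n\ge0$ such that $a_i=b_i$ for $i=1,\dots,n$ and $a_{n+1}\ne b_{n+1}$. Then $|\alpha-\beta|=q^{-2\left(\sum_{i=1}^n\deg a_i\right)-\deg a_{n+1}-\deg b_{n+1}+\deg(a_{n+1}-b_{n+1})}.$
   Context: $q$ is a positive power of a prime, $R=\mathbb F_q[Y]$, $\widehat K=\mathbb F_q((Y^{-1}))$ with absolute value $|P/Q|=q^{\deg P-\deg Q}$ extended to $\widehat K$. $[a_0;a_1,a_2,\dots]$ denotes the continued fraction $a_0+1/(a_1+1/(a_2+\cdots))$. *)

theory Defs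
  imports "HOL-Library.Cardinality" "HOL-Computational_Algebra.Polynomial" "HOL-Computational_Algebra.Formal_Laurent_Series"
begin

text \<open>We model K-hat = F_q((Y^-1)) as Laurent series 'a fls in the variable X = Y^-1
  (finitely many negative powers of X = finitely many positive powers of Y),
  where 'a is a finite field with q = CARD('a) elements.\<close>

definition poly_to_fls :: "'a::field poly \<Rightarrow> 'a fls" where
  "poly_to_fls p = poly (map_poly fls_const p) fls_X_inv"

text \<open>Absolute value: |f| = q^(deg f), where deg in Y equals minus the X-subdegree; |0| = 0.\<close>
definition fls_abs :: "'a::{finite,field} fls \<Rightarrow> real" where
  "fls_abs f = (if f = 0 then 0 else real CARD('a) powr (- real_of_int (fls_subdegree f)))"

primrec cf_fin :: "nat \<Rightarrow> (nat \<Rightarrow> 'a::field poly) \<Rightarrow> 'a fls" where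
  "cf_fin 0 a = 0"
| "cf_fin (Suc n) a = inverse (poly_to_fls (a 1) + cf_fin n (\<lambda>i. a (Suc i)))"

definition is_cf_expansion :: "'a::field fls \<Rightarrow> (nat \<Rightarrow> 'a poly) \<Rightarrow> bool" where
  "is_cf_expansion \<alpha> a \<longleftrightarrow> (\<forall>i\<ge>1. degree (a i) > 0) \<and> (\<lambda>n. cf_fin n a) \<longlonglongrightarrow> \<alpha>"

definition fls_irrational :: "'a::field fls \<Rightarrow> bool" where
  "fls_irrational \<alpha> \<longleftrightarrow> (\<nexists>P Q. Q \<noteq> 0 \<and> \<alpha> = poly_to_fls P / poly_to_fls Q)"

end

theory Submission
  imports Defs
begin

(* With t_a = [0; a_2, ...] and t_b = [0; b_2, ...],
     [0; a_1, ...] - [0; b_1, ...] = ((b_1 + t_b) - (a_1 + t_a)) / ((a_1 + t_a)(b_1 + t_b)).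
   Tails have absolute value < 1, so |a_1 + t_a| = q^(deg a_1), and the numerator is
   b_1 - a_1 plus something of absolute value < 1: for a_1 \<noteq> b_1 its absolute value is
   q^(deg (a_1 - b_1)), for a_1 = b_1 it is t_b - t_a and we recurse. This gives the exact
   absolute value of the difference of the m-th convergents for every m > n; by the
   ultrametric inequality it passes to the limit alpha - beta. *)

(* fls_vanishes_upto k f says |f| < q^(-k). *)
definition fls_vanishes_upto :: "int \<Rightarrow> 'a::zero fls \<Rightarrow> bool" where
  "fls_vanishes_upto k f \<longleftrightarrow> (\<forall>i\<le>k. fls_nth f i = 0)"

lemma fls_vanishes_upto_iff: "fls_vanishes_upto k f \<longleftrightarrow> f = 0 \<or> k < fls_subdegree f"
  unfolding fls_vanishes_upto_def
  using nth_fls_subdegree_nonzero not_le by fastforce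

lemma fls_vanishes_upto_diff:
  fixes f g :: "'a::group_add fls"
  shows "fls_vanishes_upto k f \<Longrightarrow> fls_vanishes_upto k g \<Longrightarrow> fls_vanishes_upto k (f - g)"
  by (simp add: fls_vanishes_upto_def)

lemma fls_subdegree_add_vanishing:
  fixes f g :: "'a::monoid_add fls"
  assumes "f \<noteq> 0" and "fls_vanishes_upto (fls_subdegree f) g"
  shows "f + g \<noteq> 0" and "fls_subdegree (f + g) = fls_subdegree f"
proof -
  have lead: "fls_nth (f + g) (fls_subdegree f) \<noteq> 0"
    using assms by (simp add: fls_vanishes_upto_def)
  then show "f + g \<noteq> 0" by (rule fls_nonzeroI)
  show "fls_subdegree (f + g) = fls_subdegree f"
    using lead assms(2) by (intro fls_subdegree_eqI) (simp_all add: fls_vanishes_upto_def)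
qed

lemma LIMSEQ_fls_eventually_vanishes_upto:
  fixes f :: "nat \<Rightarrow> 'a::group_add fls"
  assumes "f \<longlonglongrightarrow> x"
  shows "\<forall>\<^sub>F m in sequentially. fls_vanishes_upto k (f m - x)"
proof -
  have "fls_vanishes_upto k (y - x)" if close: "dist y x < inverse (2 ^ nat k)" for y
  proof (rule ccontr)
    assume "\<not> fls_vanishes_upto k (y - x)"
    then have "y \<noteq> x" and le: "fls_subdegree (y - x) \<le> k"
      by (auto simp: fls_vanishes_upto_iff)
    then have "inverse (2 ^ nat k) \<le> dist y x"
    proof (cases "0 \<le> fls_subdegree (y - x)")
      case True
      have "(2::real) ^ nat (fls_subdegree (y - x)) \<le> 2 ^ nat k"
        using le by (intro power_increasing) auto
      then show ?thesis
        using True \<open>y \<noteq> x\<close> by (simp add: dist_fls_def le_imp_inverse_le)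
    next
      case False
      have "dist y x = 2 ^ nat (- fls_subdegree (y - x))"
        using False \<open>y \<noteq> x\<close> by (simp add: dist_fls_def)
      moreover have "inverse ((2::real) ^ nat k) \<le> 1"
        by (simp add: inverse_le_1_iff)
      moreover have "(1::real) \<le> 2 ^ nat (- fls_subdegree (y - x))"
        by simp
      ultimately show ?thesis
        by linarith
    qed
    then show False using close by simp
  qed
  moreover have "\<forall>\<^sub>F m in sequentially. dist (f m) x < inverse (2 ^ nat k)"
    using assms by (simp add: tendsto_iff)
  ultimately show ?thesis
    by (rule eventually_mono[rotated])
qed

lemma fls_nth_poly_to_fls:
  "fls_nth (poly_to_fls p) k = (if k \<le> 0 then coeff p (nat (- k)) else 0)"
proof (induction p arbitrary: k rule: pCons_induct)
  case 0
  then show ?case by (simp add: poly_to_fls_def)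
next
  case (pCons c p)
  have "poly_to_fls (pCons c p) = fls_const c + fls_X_inv * poly_to_fls p"
    by (simp add: poly_to_fls_def map_poly_pCons)
  then show ?case
    using pCons.IH[of "k + 1"]
    by (auto simp: fls_X_inv_times_conv_shift coeff_pCons nat_diff_distrib split: nat.splits)
qed

lemma poly_to_fls_diff: "poly_to_fls (p - q) = poly_to_fls p - poly_to_fls q"
  by (rule fls_eqI) (simp add: fls_nth_poly_to_fls)

lemma poly_to_fls_eq_0_iff [simp]: "poly_to_fls p = 0 \<longleftrightarrow> p = 0"
proof
  assume "poly_to_fls p = 0"
  moreover have "fls_nth (poly_to_fls p) (- int (degree p)) = lead_coeff p"
    by (simp add: fls_nth_poly_to_fls)
  ultimately show "p = 0"
    by simp
qed (simp add: poly_to_fls_def)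

lemma fls_subdegree_poly_to_fls:
  assumes "p \<noteq> 0"
  shows "fls_subdegree (poly_to_fls p) = - int (degree p)"
  using assms by (intro fls_subdegree_eqI) (auto simp: fls_nth_poly_to_fls intro!: coeff_eq_0)

lemma poly_to_fls_add_vanishing:
  assumes "p \<noteq> 0" and "fls_vanishes_upto 0 t"
  shows "poly_to_fls p + t \<noteq> 0" and "fls_subdegree (poly_to_fls p + t) = - int (degree p)"
proof -
  have "fls_vanishes_upto (fls_subdegree (poly_to_fls p)) t"
    using assms by (simp add: fls_subdegree_poly_to_fls fls_vanishes_upto_def)
  then show "poly_to_fls p + t \<noteq> 0" and "fls_subdegree (poly_to_fls p + t) = - int (degree p)"
    using assms(1) by (simp_all add: fls_subdegree_add_vanishing fls_subdegree_poly_to_fls)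
qed

lemma cf_fin_vanishes_upto_0:
  assumes "\<forall>i\<ge>1. 0 < degree (a i)"
  shows "fls_vanishes_upto 0 (cf_fin m a)"
  using assms
proof (induction m arbitrary: a)
  case 0
  then show ?case by (simp add: fls_vanishes_upto_def)
next
  case (Suc m)
  have "a 1 \<noteq> 0" and "fls_vanishes_upto 0 (cf_fin m (\<lambda>i. a (Suc i)))"
    using Suc by auto
  then have "poly_to_fls (a 1) + cf_fin m (\<lambda>i. a (Suc i)) \<noteq> 0"
    "fls_subdegree (poly_to_fls (a 1) + cf_fin m (\<lambda>i. a (Suc i))) = - int (degree (a 1))"
    by (rule poly_to_fls_add_vanishing)+
  then show ?case
    using Suc.prems by (simp add: fls_vanishes_upto_iff)
qed

lemma fls_subdegree_inverse_diff:
  fixes U V :: "'a::field fls"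
  assumes "U \<noteq> 0" and "V \<noteq> 0" and "U \<noteq> V"
  shows "inverse U \<noteq> inverse V"
    and "fls_subdegree (inverse U - inverse V) =
      fls_subdegree (V - U) - fls_subdegree U - fls_subdegree V"
proof -
  have "inverse U - inverse V = (V - U) * inverse U * inverse V"
    using assms by (simp add: field_simps)
  then show "inverse U \<noteq> inverse V" and
    "fls_subdegree (inverse U - inverse V) =
      fls_subdegree (V - U) - fls_subdegree U - fls_subdegree V"
    using assms by auto
qed

lemma cf_fin_Suc_diff_subdegree:
  assumes "\<forall>i\<ge>1. 0 < degree (a i)" and "\<forall>i\<ge>1. 0 < degree (b i)"
    and D: "D = poly_to_fls (b 1 - a 1) + (cf_fin m (\<lambda>i. b (Suc i)) - cf_fin m (\<lambda>i. a (Suc i)))"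
    and "D \<noteq> 0"
  shows "cf_fin (Suc m) a \<noteq> cf_fin (Suc m) b"
    and "fls_subdegree (cf_fin (Suc m) a - cf_fin (Suc m) b) =
      fls_subdegree D + int (degree (a 1)) + int (degree (b 1))"
proof -
  define U where "U = poly_to_fls (a 1) + cf_fin m (\<lambda>i. a (Suc i))"
  define V where "V = poly_to_fls (b 1) + cf_fin m (\<lambda>i. b (Suc i))"
  have "a 1 \<noteq> 0" "b 1 \<noteq> 0"
    using assms(1,2) by auto
  then have "U \<noteq> 0" "fls_subdegree U = - int (degree (a 1))"
    and "V \<noteq> 0" "fls_subdegree V = - int (degree (b 1))"
    unfolding U_def V_def using assms(1,2)
    by (simp_all add: poly_to_fls_add_vanishing cf_fin_vanishes_upto_0)
  moreover have "V - U = D"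
    unfolding U_def V_def D poly_to_fls_diff by simp
  ultimately show "cf_fin (Suc m) a \<noteq> cf_fin (Suc m) b" and
    "fls_subdegree (cf_fin (Suc m) a - cf_fin (Suc m) b) =
      fls_subdegree D + int (degree (a 1)) + int (degree (b 1))"
    using fls_subdegree_inverse_diff[of U V] \<open>D \<noteq> 0\<close> by (auto simp: U_def V_def)
qed

lemma cf_fin_diff_subdegree:
  assumes "\<forall>i\<ge>1. 0 < degree (a i)" and "\<forall>i\<ge>1. 0 < degree (b i)"
    and "\<forall>i\<in>{1..n}. a i = b i" and "a (n+1) \<noteq> b (n+1)" and "n < m"
  shows "cf_fin m a \<noteq> cf_fin m b \<and> fls_subdegree (cf_fin m a - cf_fin m b) =
     2 * (\<Sum>i=1..n. int (degree (a i))) + int (degree (a (n+1))) + int (degree (b (n+1)))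
       - int (degree (a (n+1) - b (n+1)))"
  using assms
proof (induction n arbitrary: a b m)
  case 0
  obtain m' where m: "m = Suc m'"
    using "0.prems"(5) by (cases m) auto
  have "b 1 - a 1 \<noteq> 0"
    using "0.prems"(4) by simp
  moreover have "fls_vanishes_upto 0 (cf_fin m' (\<lambda>i. b (Suc i)) - cf_fin m' (\<lambda>i. a (Suc i)))"
    using "0.prems"(1,2) by (simp add: fls_vanishes_upto_diff cf_fin_vanishes_upto_0)
  ultimately have numerator:
    "poly_to_fls (b 1 - a 1) + (cf_fin m' (\<lambda>i. b (Suc i)) - cf_fin m' (\<lambda>i. a (Suc i))) \<noteq> 0"
    "fls_subdegree (poly_to_fls (b 1 - a 1)
       + (cf_fin m' (\<lambda>i. b (Suc i)) - cf_fin m' (\<lambda>i. a (Suc i)))) = - int (degree (b 1 - a 1))"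
    by (rule poly_to_fls_add_vanishing)+
  have "degree (b 1 - a 1) = degree (a 1 - b 1)"
    by (metis degree_minus minus_diff_eq)
  then show ?case
    using cf_fin_Suc_diff_subdegree[OF "0.prems"(1,2) refl numerator(1)] numerator(2)
    by (simp add: m)
next
  case (Suc n)
  obtain m' where m: "m = Suc m'" and "n < m'"
    using Suc.prems(5) by (cases m) auto
  have "a 1 = b 1"
    using Suc.prems(3) by auto
  have IH: "cf_fin m' (\<lambda>i. a (Suc i)) \<noteq> cf_fin m' (\<lambda>i. b (Suc i)) \<and>
     fls_subdegree (cf_fin m' (\<lambda>i. a (Suc i)) - cf_fin m' (\<lambda>i. b (Suc i))) =
     2 * (\<Sum>i=1..n. int (degree (a (Suc i)))) + int (degree (a (Suc n+1)))
       + int (degree (b (Suc n+1))) - int (degree (a (Suc n+1) - b (Suc n+1)))"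
    using Suc.IH[of "\<lambda>i. a (Suc i)" "\<lambda>i. b (Suc i)" m'] Suc.prems \<open>n < m'\<close> by auto
  have sum: "(\<Sum>i=1..Suc n. f i) = f 1 + (\<Sum>i=1..n. f (Suc i))" for f :: "nat \<Rightarrow> int"
    by (simp add: sum.atLeast_Suc_atMost flip: sum.shift_bounds_cl_Suc_ivl)
  have numerator:
    "poly_to_fls (b 1 - a 1) + (cf_fin m' (\<lambda>i. b (Suc i)) - cf_fin m' (\<lambda>i. a (Suc i)))
      = - (cf_fin m' (\<lambda>i. a (Suc i)) - cf_fin m' (\<lambda>i. b (Suc i)))"
    using \<open>a 1 = b 1\<close> by (simp add: poly_to_fls_def)
  have "- (cf_fin m' (\<lambda>i. a (Suc i)) - cf_fin m' (\<lambda>i. b (Suc i))) \<noteq> 0"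
    using IH by auto
  from cf_fin_Suc_diff_subdegree[OF Suc.prems(1,2) numerator[symmetric] this]
  have "cf_fin m a \<noteq> cf_fin m b"
    "fls_subdegree (cf_fin m a - cf_fin m b) =
      fls_subdegree (cf_fin m' (\<lambda>i. a (Suc i)) - cf_fin m' (\<lambda>i. b (Suc i)))
      + int (degree (a 1)) + int (degree (b 1))"
    unfolding m fls_uminus_subdegree .
  then show ?case
    unfolding sum[of "\<lambda>i. int (degree (a i))"] using IH \<open>a 1 = b 1\<close> by simp
qed

lemma fls_subdegree_diff_of_LIMSEQ:
  fixes f g :: "nat \<Rightarrow> 'a::ab_group_add fls"
  assumes "f \<longlonglongrightarrow> x" and "g \<longlonglongrightarrow> y"
    and "\<forall>\<^sub>F m in sequentially. f m \<noteq> g m \<and> fls_subdegree (f m - g m) = D"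
  shows "x \<noteq> y" and "fls_subdegree (x - y) = D"
proof -
  have "\<forall>\<^sub>F m in sequentially. (f m \<noteq> g m \<and> fls_subdegree (f m - g m) = D)
      \<and> fls_vanishes_upto D (f m - x) \<and> fls_vanishes_upto D (g m - y)"
    by (intro eventually_conj[OF assms(3)] eventually_conj LIMSEQ_fls_eventually_vanishes_upto
        assms(1,2))
  then obtain m where "f m - g m \<noteq> 0" and subdegree: "fls_subdegree (f m - g m) = D"
    and close: "fls_vanishes_upto D (f m - x)" "fls_vanishes_upto D (g m - y)"
    by (auto dest: eventually_happens'[OF sequentially_bot])
  have split: "x - y = (f m - g m) + ((g m - y) - (f m - x))"
    by simp
  have "fls_vanishes_upto (fls_subdegree (f m - g m)) ((g m - y) - (f m - x))"
    unfolding subdegree using close(2,1) by (rule fls_vanishes_upto_diff)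
  from fls_subdegree_add_vanishing[OF \<open>f m - g m \<noteq> 0\<close> this]
  show "x \<noteq> y" and "fls_subdegree (x - y) = D"
    unfolding split[symmetric] subdegree by simp_all
qed

theorem lemma2p3:
  fixes \<alpha> \<beta> :: "'a::{finite,field} fls"
    and a b :: "nat \<Rightarrow> 'a poly"
    and n :: nat
  assumes "fls_irrational \<alpha>" and "fls_irrational \<beta>"
    and "is_cf_expansion \<alpha> a" and "is_cf_expansion \<beta> b"
    and "\<forall>i\<in>{1..n}. a i = b i"
    and "a (n+1) \<noteq> b (n+1)"
  shows "fls_abs (\<alpha> - \<beta>) =
    real CARD('a) powr real_of_int
      (- 2 * (\<Sum>i=1..n. int (degree (a i))) - int (degree (a (n+1)))
       - int (degree (b (n+1))) + int (degree (a (n+1) - b (n+1))))"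
proof -
  have deg: "\<forall>i\<ge>1. 0 < degree (a i)" "\<forall>i\<ge>1. 0 < degree (b i)"
    and lim: "(\<lambda>m. cf_fin m a) \<longlonglongrightarrow> \<alpha>" "(\<lambda>m. cf_fin m b) \<longlonglongrightarrow> \<beta>"
    using assms(3,4) by (auto simp: is_cf_expansion_def)
  define D where "D = 2 * (\<Sum>i=1..n. int (degree (a i))) + int (degree (a (n+1)))
    + int (degree (b (n+1))) - int (degree (a (n+1) - b (n+1)))"
  have "\<forall>\<^sub>F m in sequentially. cf_fin m a \<noteq> cf_fin m b \<and> fls_subdegree (cf_fin m a - cf_fin m b) = D"
    using eventually_gt_at_top[of n] unfolding D_def
    by eventually_elim (rule cf_fin_diff_subdegree[OF deg assms(5,6)])
  from fls_subdegree_diff_of_LIMSEQ[OF lim this]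
  have "fls_abs (\<alpha> - \<beta>) = real CARD('a) powr real_of_int (- D)"
    by (simp add: fls_abs_def)
  also have "- D = - 2 * (\<Sum>i=1..n. int (degree (a i)))
      - int (degree (a (n+1))) - int (degree (b (n+1))) + int (degree (a (n+1) - b (n+1)))"
    unfolding D_def by simp
  finally show ?thesis .
qed

end
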